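(* Let $D$ be a dataset, let $\Omega=\{\omega_1,\dots,\omega_k\}$ be a finite set of outcomes, let $q$ be a real-valued quality function with sensitivity $\Delta>0$, and let $\varepsilon>0$. Write $q_i=q(D,\omega_i)$ and $q_*=\max_i q_i$. Then the Permute-and-Flip mechanism and Report Noisy Max with Exponential Noise (both defined below, run on the same inputs $D,q,\Delta,\Omega,\varepsilon$) have the same output distribution on $\{1,\dots,k\}$; that is, for every $i\in\{1,\dots,k\}$ the probability that Permute-and-Flip returns $i$ equals the probability that Report Noisy Max with Exponential Noise returns $i$.
   Context: $\mathrm{Expo}(\lambda)$ denotes the exponential distribution with rate $\lambda>0$, with density $f(x;\lambda)=\lambda e^{-\lambda x}\mathbf{1}[x\ge 0]$. $\mathrm{Bernoulli}(p)$ is a coin that equals $1$ with probability $p$. The sensitivity of $q$ is $\Delta=\sup_{D_1,D_2}\max_{\omega_i}|q(D_1,\omega_i)-q(D_2,\omega_i)|$ over neighboring datasets (differing by addition/removal of one person's data). Report Noisy Max with Exponential Noise: for each $i=1,\dots,k$ independently set $v_i=q(D,\omega_i)+X_i$ with $X_i\sim\mathrm{Expo}(\varepsilon/(2\Delta))$; return $\arg\max_i v_i$ (ties occur with probability zero). Permute-and-Flip: compute $q_*=\max_i q(D,\omega_i)$; draw a uniformly random permutation $\pi$ of $\{1,\dots,k\}$; for $j=1,\dots,k$ in order, let $r=\pi(j)$, $p=\exp\left(\frac{\varepsilon}{2\Delta}(q(D,\omega_r)-q_* )\right)$, and flip an independent $\mathrm{Bernoulli}(p)$ coin; if it equals $1$,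 return $r$ and stop. (The coin for an index attaining $q_*$ has $p=1$, so the procedure always returns.) *)

theory Defs
  imports "HOL-Probability.Probability" "HOL-Combinatorics.Multiset_Permutations"
begin

definition sensitivity ::
  "('d \<Rightarrow> 'd \<Rightarrow> bool) \<Rightarrow> ('d \<Rightarrow> 'o \<Rightarrow> real) \<Rightarrow> (nat \<Rightarrow> 'o) \<Rightarrow> nat \<Rightarrow> real" where
  "sensitivity nbr q \<omega> k =
     (SUP p\<in>{(D1, D2). nbr D1 D2}. Max ((\<lambda>i. \<bar>q (fst p) (\<omega> i) - q (snd p) (\<omega> i)\<bar>) ` {1..k}))"

text \<open>Report Noisy Max with exponential noise: probability that index i is returned,
  i.e. that the noisy score of i strictly exceeds all others (ties have probability zero).\<close>
definition rnm_exp_prob :: "(nat \<Rightarrow> real) \<Rightarrow> nat \<Rightarrow> real \<Rightarrow> real \<Rightarrow> nat \<Rightarrow> real" where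
  "rnm_exp_prob qv k eps \<Delta> i =
     (let M = PiM {1..k} (\<lambda>_. density lborel (exponential_density (eps / (2 * \<Delta>))))
      in measure M {X \<in> space M. \<forall>j\<in>{1..k}. j \<noteq> i \<longrightarrow> qv j + X j < qv i + X i})"

fun pf_flip :: "(nat \<Rightarrow> real) \<Rightarrow> nat list \<Rightarrow> nat pmf" where
  "pf_flip p [] = return_pmf 0"
| "pf_flip p (r # rs) =
     bind_pmf (bernoulli_pmf (p r)) (\<lambda>b. if b then return_pmf r else pf_flip p rs)"

definition permute_and_flip :: "(nat \<Rightarrow> real) \<Rightarrow> nat \<Rightarrow> real \<Rightarrow> real \<Rightarrow> nat pmf" where
  "permute_and_flip qv k eps \<Delta> =
     (let qstar = Max (qv ` {1..k})
      in bind_pmf (pmf_of_set (permutations_of_set {1..k}))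
           (pf_flip (\<lambda>r. exp (eps / (2 * \<Delta>) * (qv r - qstar)))))"

end

theory Submission
  imports Defs
begin

text \<open>
  Put c = \<epsilon> / (2 \<Delta>) and p_j = exp (c (q_j - q_* )), so that 0 < p_j \<le> 1. Both mechanisms
  return i with probability p_i \<integral>_0^1 \<Prod>_{j \<noteq> i} (1 - t p_j) dt.
  For Permute-and-Flip this follows by induction on the set of candidates, conditioning on the
  first element of the permutation: the integral satisfies the same recursion, which is the
  fundamental theorem of calculus applied to (t - 1) \<Prod>_{j \<in> J} (1 - t p_j) on [0, 1].
  For Report Noisy Max, conditioning on the noise y of candidate i gives
  \<integral>_{y \<ge> q_* - q_i} c e^{-c y} \<Prod>_{j \<noteq> i} (1 - e^{-c (q_i + y - q_j)}) dy,
  which is the same integral after substituting t = e^{-c y} / p_i.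
\<close>

text \<open>
  The probability that every coin in J shows tails when the heads-probabilities p are scaled by t.
\<close>
definition tails_poly :: "(nat \<Rightarrow> real) \<Rightarrow> nat set \<Rightarrow> real \<Rightarrow> real" where
  "tails_poly p J t = (\<Prod>j\<in>J. 1 - t * p j)"

definition tails_integral :: "(nat \<Rightarrow> real) \<Rightarrow> nat set \<Rightarrow> real" where
  "tails_integral p J = integral {0..1} (tails_poly p J)"

lemma continuous_on_tails_poly: "continuous_on A (tails_poly p J)"
  unfolding tails_poly_def by (intro continuous_intros)

lemma integrable_tails_poly: "tails_poly p J integrable_on {a..b}"
  by (intro integrable_continuous_real continuous_on_tails_poly)

lemma tails_poly_remove:
  "finite J \<Longrightarrow> r \<in> J \<Longrightarrow> tails_poly p J t = (1 - t * p r) * tails_poly p (J - {r}) t"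
  unfolding tails_poly_def by (simp add: prod.remove)

lemma tails_poly_nonneg:
  assumes "\<And>j. j \<in> J \<Longrightarrow> 0 \<le> p j \<and> p j \<le> 1" and "t \<in> {0..1}"
  shows "0 \<le> tails_poly p J t"
  unfolding tails_poly_def
proof (rule prod_nonneg)
  fix j assume "j \<in> J"
  then have "t * p j \<le> 1" using assms by (auto intro: mult_le_one)
  then show "0 \<le> 1 - t * p j" by simp
qed

lemma tails_integral_nonneg:
  assumes "\<And>j. j \<in> J \<Longrightarrow> 0 \<le> p j \<and> p j \<le> 1"
  shows "0 \<le> tails_integral p J"
  unfolding tails_integral_def
  by (intro integral_nonneg integrable_tails_poly tails_poly_nonneg assms)

lemma has_field_derivative_tails_poly_shifted:
  assumes J: "finite J"
  shows "((\<lambda>t. (t - 1) * tails_poly p J t) has_field_derivative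
    (card J + 1) * tails_poly p J t - (\<Sum>r\<in>J. (1 - p r) * tails_poly p (J - {r}) t)) (at t)"
proof -
  have deriv: "((\<lambda>t. (t - 1) * tails_poly p J t) has_field_derivative
      tails_poly p J t - (t - 1) * (\<Sum>r\<in>J. p r * tails_poly p (J - {r}) t)) (at t)"
    unfolding tails_poly_def
    by (auto intro!: derivative_eq_intros has_field_derivative_prod simp: sum_negf)
  have "(\<Sum>r\<in>J. (1 - p r) * tails_poly p (J - {r}) t) =
      (\<Sum>r\<in>J. tails_poly p J t + (t - 1) * (p r * tails_poly p (J - {r}) t))"
    by (rule sum.cong) (auto simp: tails_poly_remove[OF J] algebra_simps)
  also have "\<dots> = card J * tails_poly p J t + (t - 1) * (\<Sum>r\<in>J. p r * tails_poly p (J - {r}) t)"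
    by (simp add: sum.distrib sum_distrib_left)
  finally have sum_eq: "(\<Sum>r\<in>J. (1 - p r) * tails_poly p (J - {r}) t) = \<dots>" .
  show ?thesis
    unfolding sum_eq using deriv by (simp add: algebra_simps)
qed

lemma tails_integral_rec:
  assumes J: "finite J"
  shows "(card J + 1) * tails_integral p J = 1 + (\<Sum>r\<in>J. (1 - p r) * tails_integral p (J - {r}))"
proof -
  let ?h = "\<lambda>t. (card J + 1) * tails_poly p J t - (\<Sum>r\<in>J. (1 - p r) * tails_poly p (J - {r}) t)"
  have "(?h has_integral (1 - 1) * tails_poly p J 1 - (0 - 1) * tails_poly p J 0) {0..1}"
    using has_field_derivative_tails_poly_shifted[OF J]
    by (intro fundamental_theorem_of_calculus)
       (auto simp: has_real_derivative_iff_has_vector_derivative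
          intro: has_vector_derivative_at_within)
  then have "(?h has_integral 1) {0..1}"
    by (simp add: tails_poly_def)
  moreover have "(?h has_integral
      (card J + 1) * tails_integral p J - (\<Sum>r\<in>J. (1 - p r) * tails_integral p (J - {r}))) {0..1}"
    unfolding tails_integral_def
    by (intro has_integral_diff has_integral_mult_right has_integral_sum J integrable_integral
          integrable_tails_poly)
  ultimately have "1 = (card J + 1) * tails_integral p J -
      (\<Sum>r\<in>J. (1 - p r) * tails_integral p (J - {r}))"
    by (rule has_integral_unique)
  then show ?thesis by linarith
qed

lemma set_pmf_pf_flip: "set_pmf (pf_flip p xs) \<subseteq> insert 0 (set xs)"
  by (induction xs) (auto split: if_splits)

definition permute_flip :: "(nat \<Rightarrow> real) \<Rightarrow> nat set \<Rightarrow> nat pmf" where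
  "permute_flip p S = bind_pmf (pmf_of_set (permutations_of_set S)) (pf_flip p)"

text \<open>pf_flip returns the junk value 0 when all coins show tails, hence the outcome 0 is excluded.\<close>
lemma pmf_permute_flip_notin:
  assumes "finite S" "i \<notin> S" "i \<noteq> 0"
  shows "pmf (permute_flip p S) i = 0"
proof -
  have "i \<notin> set_pmf (pf_flip p xs)" if "xs \<in> permutations_of_set S" for xs
    using that assms set_pmf_pf_flip[of p xs] by (auto simp: permutations_of_set_def)
  then have "i \<notin> set_pmf (permute_flip p S)"
    using assms by (simp add: permute_flip_def)
  then show ?thesis by (simp add: set_pmf_eq)
qed

lemma permute_flip_first:
  assumes "finite S" "S \<noteq> {}"
  shows "permute_flip p S = bind_pmf (pmf_of_set S) (\<lambda>x.
    bind_pmf (bernoulli_pmf (p x)) (\<lambda>b. if b then return_pmf x else permute_flip p (S - {x})))"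
proof -
  have "permute_flip p S = bind_pmf (pmf_of_set S) (\<lambda>x.
      bind_pmf (pmf_of_set (permutations_of_set (S - {x}))) (\<lambda>xs. pf_flip p (x # xs)))"
    unfolding permute_flip_def
    by (simp add: random_permutation_of_set assms bind_assoc_pmf bind_return_pmf)
  also have "\<dots> = bind_pmf (pmf_of_set S) (\<lambda>x.
      bind_pmf (bernoulli_pmf (p x)) (\<lambda>b. if b then return_pmf x else permute_flip p (S - {x})))"
    unfolding pf_flip.simps permute_flip_def
    by (subst bind_commute_pmf) (auto intro!: bind_pmf_cong)
  finally show ?thesis .
qed

lemma pmf_permute_flip_rec:
  assumes "finite S" "S \<noteq> {}" "\<And>j. j \<in> S \<Longrightarrow> 0 \<le> p j \<and> p j \<le> 1"
  shows "pmf (permute_flip p S) i =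
    (\<Sum>x\<in>S. p x * of_bool (x = i) + (1 - p x) * pmf (permute_flip p (S - {x})) i) / card S"
proof -
  have "pmf (permute_flip p S) i = (\<Sum>x\<in>S. pmf (bind_pmf (bernoulli_pmf (p x))
      (\<lambda>b. if b then return_pmf x else permute_flip p (S - {x}))) i) / card S"
    by (subst permute_flip_first) (use assms in \<open>simp_all add: pmf_bind_pmf_of_set\<close>)
  also have "\<dots> =
      (\<Sum>x\<in>S. p x * of_bool (x = i) + (1 - p x) * pmf (permute_flip p (S - {x})) i) / card S"
    using assms(3) by (intro arg_cong[where f="\<lambda>s. s / _"] sum.cong) (auto simp: pmf_bind)
  finally show ?thesis .
qed

lemma pmf_permute_flip:
  assumes "finite S" "i \<in> S" "i \<noteq> 0" "\<And>j. j \<in> S \<Longrightarrow> 0 \<le> p j \<and> p j \<le> 1"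
  shows "pmf (permute_flip p S) i = p i * tails_integral p (S - {i})"
  using assms
proof (induction S rule: finite_psubset_induct)
  case (psubset S)
  define J where "J = S - {i}"
  have J: "finite J" "i \<notin> J" "card S = card J + 1"
    using psubset.prems psubset.hyps card_gt_0_iff[of S] by (auto simp: J_def card_Suc_Diff1)
  have IH: "pmf (permute_flip p (S - {x})) i = p i * tails_integral p (J - {x})" if "x \<in> J" for x
  proof -
    have "S - {x} - {i} = J - {x}" by (auto simp: J_def)
    then show ?thesis
      using that psubset.prems psubset.hyps by (subst psubset.IH) (auto simp: J_def)
  qed
  have "card S * pmf (permute_flip p S) i =
      (\<Sum>x\<in>S. p x * of_bool (x = i) + (1 - p x) * pmf (permute_flip p (S - {x})) i)"
    using psubset.prems psubset.hyps by (subst pmf_permute_flip_rec) auto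
  also have "\<dots> = (p i + (1 - p i) * pmf (permute_flip p J) i) +
      (\<Sum>x\<in>J. p x * of_bool (x = i) + (1 - p x) * pmf (permute_flip p (S - {x})) i)"
    unfolding J_def using psubset.prems psubset.hyps by (subst sum.remove) auto
  also have "\<dots> = p i + (\<Sum>x\<in>J. (1 - p x) * (p i * tails_integral p (J - {x})))"
  proof -
    have "pmf (permute_flip p J) i = 0"
      using J(1,2) psubset.prems by (intro pmf_permute_flip_notin)
    moreover have "p x * of_bool (x = i) + (1 - p x) * pmf (permute_flip p (S - {x})) i =
        (1 - p x) * (p i * tails_integral p (J - {x}))" if "x \<in> J" for x
      using that J(2) IH[OF that] by auto
    ultimately show ?thesis by simp
  qed
  also have "\<dots> = p i * (1 + (\<Sum>x\<in>J. (1 - p x) * tails_integral p (J - {x})))"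
    by (simp add: distrib_left sum_distrib_left mult.left_commute)
  also have "\<dots> = card S * (p i * tails_integral p J)"
    using tails_integral_rec[OF J(1), of p] J(3) by simp
  finally show ?case
    using J(3) by (simp add: J_def)
qed

text \<open>For a < 0 both sides are 0, because ennreal truncates negative reals.\<close>
lemma emeasure_exponential_density_lessThan:
  assumes "0 < l"
  shows "emeasure (density lborel (exponential_density l)) {..<a} = ennreal (1 - exp (- l * a))"
proof -
  have "AE x in lborel. x \<in> {a} \<longrightarrow> ennreal (exponential_density l x) = 0"
    using AE_lborel_singleton[of a] by eventually_elim simp
  then have "{a} \<in> null_sets (density lborel (exponential_density l))"
    by (subst null_sets_density_iff) auto
  then have "emeasure (density lborel (exponential_density l)) ({..a} - {a}) =
      emeasure (density lborel (exponential_density l)) {..a}"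
    by (intro emeasure_Diff_null_set) auto
  moreover have "{..a} - {a} = {..<a}" by auto
  ultimately show ?thesis
    using assms
    by (simp add: emeasure_erlang_density erlang_CDF_0 ennreal_eq_0_iff mult_pos_neg less_imp_le)
qed

lemma emeasure_PiM_noisy_max:
  fixes E :: "real measure" and a :: "nat \<Rightarrow> real"
  assumes E: "prob_space E" "sets E = sets borel" and K: "finite K" "i \<in> K"
  shows "emeasure (PiM K (\<lambda>_. E))
      {X \<in> space (PiM K (\<lambda>_. E)). \<forall>j\<in>K. j \<noteq> i \<longrightarrow> a j + X j < a i + X i} =
    (\<integral>\<^sup>+y. (\<Prod>j\<in>K - {i}. emeasure E {..< a i + y - a j}) \<partial>E)"
proof -
  interpret E: prob_space E by (rule E(1))
  interpret P: product_prob_space "\<lambda>_. E" K by unfold_locales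
  define M where "M = PiM K (\<lambda>_. E)"
  define A where "A = {X \<in> space M. \<forall>j\<in>K. j \<noteq> i \<longrightarrow> a j + X j < a i + X i}"
  define I where "I = K - {i}"
  have K_eq: "K = insert i I" and I: "finite I" "i \<notin> I"
    using K by (auto simp: I_def)
  have space_E: "space E = UNIV"
    using sets_eq_imp_space_eq[OF E(2)] by simp
  have "(\<lambda>X. X j) \<in> borel_measurable M" if "j \<in> K" for j
    using measurable_component_singleton[OF that, of "\<lambda>_. E"]
      measurable_cong_sets[OF refl E(2), of M]
    by (simp add: M_def)
  then have A_sets: "A \<in> sets M"
    unfolding A_def using K
    by (intro sets.sets_Collect_finite_All) (auto intro!: borel_measurable_less)
  have "emeasure M A = (\<integral>\<^sup>+X. indicator A X \<partial>PiM (insert i I) (\<lambda>_. E))"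
    using A_sets by (simp add: M_def K_eq[symmetric])
  also have "\<dots> = (\<integral>\<^sup>+y. (\<integral>\<^sup>+x. indicator A (x(i := y)) \<partial>PiM I (\<lambda>_. E)) \<partial>E)"
    using A_sets I K_eq by (intro P.product_nn_integral_insert_rev) (simp_all add: M_def)
  also have "\<dots> = (\<integral>\<^sup>+y. (\<Prod>j\<in>I. emeasure E {..< a i + y - a j}) \<partial>E)"
  proof (intro nn_integral_cong)
    fix y
    have "(\<integral>\<^sup>+x. indicator A (x(i := y)) \<partial>PiM I (\<lambda>_. E)) =
        (\<integral>\<^sup>+x. indicator (PiE I (\<lambda>j. {..< a i + y - a j})) x \<partial>PiM I (\<lambda>_. E))"
    proof (intro nn_integral_cong)
      fix x assume "x \<in> space (PiM I (\<lambda>_. E))"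
      then have "x \<in> PiE I (\<lambda>_. UNIV)" by (simp add: space_PiM space_E)
      then have "x(i := y) \<in> A \<longleftrightarrow> x \<in> PiE I (\<lambda>j. {..< a i + y - a j})"
        using I unfolding A_def M_def K_eq
        by (auto simp: space_PiM space_E PiE_iff extensional_def algebra_simps)
      then show "indicator A (x(i := y)) = indicator (PiE I (\<lambda>j. {..< a i + y - a j})) x"
        by (simp add: indicator_def)
    qed
    also have "\<dots> = (\<Prod>j\<in>I. emeasure E {..< a i + y - a j})"
      using I by (simp add: P.emeasure_PiM sets_PiM_I_finite E(2))
    finally show "(\<integral>\<^sup>+x. indicator A (x(i := y)) \<partial>PiM I (\<lambda>_. E)) = \<dots>" .
  qed
  finally show ?thesis
    by (simp add: M_def A_def I_def)
qed

lemma nn_integral_exp_substitution: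
  fixes g :: "real \<Rightarrow> real"
  assumes c: "0 < c" and g: "continuous_on UNIV g" and g_nonneg: "\<And>t. t \<in> {0..1} \<Longrightarrow> 0 \<le> g t"
  shows "(\<integral>\<^sup>+y. ennreal (c * exp (- c * y) * g (exp (- c * (y - y0)))) * indicator {y0..} y
      \<partial>lborel) =
    ennreal (exp (- c * y0) * integral {0..1} g)"
proof -
  \<comment> \<open>an antiderivative on an open interval around [0, 1], so that the chain rule applies at t = 1\<close>
  define G where "G t = integral {-1..t} g" for t
  have G_deriv: "(G has_real_derivative g t) (at t)" if "t \<in> {-1<..<2}" for t
  proof -
    have "(G has_real_derivative g t) (at t within {-1..2})"
      unfolding G_def using that g
      by (intro integral_has_real_derivative) (auto intro: continuous_on_subset)
    moreover have "at t within {-1..2} = at t"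
      using that by (intro at_within_interior) auto
    ultimately show ?thesis by simp
  qed
  define s where "s y = exp (- c * (y - y0))" for y
  define F where "F y = - exp (- c * y0) * G (s y)" for y
  have F_deriv: "(F has_real_derivative c * exp (- c * y) * g (s y)) (at y)" if "y0 \<le> y" for y
  proof -
    have "0 < s y" "s y \<le> 1"
      using that c by (simp_all add: s_def)
    then have "s y \<in> {-1<..<2}" by simp
    moreover have "(s has_real_derivative - c * s y) (at y)"
      unfolding s_def by (auto intro!: derivative_eq_intros)
    ultimately have chain:
      "(F has_real_derivative - exp (- c * y0) * (g (s y) * (- c * s y))) (at y)"
      unfolding F_def by (intro DERIV_cmult DERIV_chain2[OF G_deriv])
    have "exp (- c * y0) * s y = exp (- c * y)"
      by (simp add: s_def flip: exp_add) (simp add: algebra_simps)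
    then have "- exp (- c * y0) * (g (s y) * (- c * s y)) = c * exp (- c * y) * g (s y)"
      by (simp flip: \<open>exp (- c * y0) * s y = exp (- c * y)\<close> add: algebra_simps)
    with chain show ?thesis
      by (simp only:)
  qed
  have "filterlim (\<lambda>y. - c * (y - y0)) at_bot at_top"
    using c filterlim_tendsto_add_at_top[OF tendsto_const filterlim_ident, of "- y0"]
    by (intro filterlim_tendsto_neg_mult_at_bot[OF tendsto_const]) auto
  then have "(s \<longlongrightarrow> 0) at_top"
    unfolding s_def by (rule filterlim_compose[OF exp_at_bot])
  then have F_lim: "(F \<longlongrightarrow> - exp (- c * y0) * G 0) at_top"
    unfolding F_def using G_deriv[of 0, THEN DERIV_isCont]
    by (intro tendsto_mult_left isCont_tendsto_compose[where g=G]) auto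
  have "g \<in> borel_measurable borel"
    using g by (rule borel_measurable_continuous_onI)
  then have meas: "(\<lambda>y. c * exp (- c * y) * g (s y)) \<in> borel_measurable borel"
    unfolding s_def by measurable
  have nonneg: "0 \<le> c * exp (- c * y) * g (s y)" if "y0 \<le> y" for y
    using c g_nonneg[of "s y"] that by (simp add: s_def)
  have "(\<integral>\<^sup>+y. ennreal (c * exp (- c * y) * g (s y)) * indicator {y0..} y \<partial>lborel) =
      ennreal (- exp (- c * y0) * G 0 - F y0)"
    by (rule nn_integral_FTC_atLeast[OF meas F_deriv nonneg F_lim])
  also have "- exp (- c * y0) * G 0 - F y0 = exp (- c * y0) * (G 1 - G 0)"
    by (simp add: F_def s_def algebra_simps)
  also have "G 1 - G 0 = integral {0..1} g"
    using Henstock_Kurzweil_Integration.integral_combine[of "-1" 0 1 g] g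
    by (simp add: G_def integrable_continuous_real continuous_on_subset)
  finally show ?thesis
    by (simp add: s_def)
qed

text \<open>Below y0 candidate i loses for sure to a maximiser of a, so the integrand vanishes there.\<close>
lemma exponential_density_noisy_max_integrand:
  fixes a :: "nat \<Rightarrow> real"
  assumes c: "0 < c" and K: "finite K" "i \<in> K"
  defines "p \<equiv> \<lambda>j. exp (c * (a j - Max (a ` K)))" and "y0 \<equiv> Max (a ` K) - a i"
  shows "ennreal (exponential_density c y) *
      (\<Prod>j\<in>K - {i}. ennreal (1 - exp (- c * (a i + y - a j)))) =
    ennreal (c * exp (- c * y) * tails_poly p (K - {i}) (exp (- c * (y - y0)))) *
      indicator {y0..} y"
proof -
  have a_le: "a j \<le> Max (a ` K)" if "j \<in> K" for j
    using K that by (intro Max_ge) auto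
  have factor: "1 - exp (- c * (y - y0)) * p j = 1 - exp (- c * (a i + y - a j))" for j
    by (simp add: p_def y0_def flip: exp_add) (simp add: algebra_simps)
  show ?thesis
  proof (cases "y0 \<le> y")
    case True
    then have "0 \<le> y"
      using a_le[OF K(2)] by (simp add: y0_def)
    have "0 \<le> 1 - exp (- c * (a i + y - a j))" if "j \<in> K - {i}" for j
      using a_le[of j] that True c by (simp add: y0_def mult_nonneg_nonneg)
    then have "(\<Prod>j\<in>K - {i}. ennreal (1 - exp (- c * (a i + y - a j)))) =
        ennreal (tails_poly p (K - {i}) (exp (- c * (y - y0))))"
      unfolding tails_poly_def factor by (rule prod_ennreal)
    then show ?thesis
      using True \<open>0 \<le> y\<close> c
      by (simp add: exponential_density_def ennreal_mult' mult.commute)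
  next
    case False
    have "Max (a ` K) \<in> a ` K"
      using K by (intro Max_in) auto
    then obtain jm where jm: "jm \<in> K" "a jm = Max (a ` K)"
      by auto
    have "(\<Prod>j\<in>K - {i}. ennreal (1 - exp (- c * (a i + y - a j)))) = 0" if "0 \<le> y"
    proof -
      have "jm \<in> K - {i}" and "1 - exp (- c * (a i + y - a jm)) < 0"
        using False that jm c by (auto simp: y0_def mult_pos_neg)
      with K(1) show ?thesis
        by (intro prod_zero bexI[of _ jm] ennreal_lt_0) auto
    qed
    then show ?thesis
      using False by (cases "0 \<le> y") (auto simp: exponential_density_def)
  qed
qed

lemma measure_exponential_noisy_max:
  fixes a :: "nat \<Rightarrow> real"
  assumes c: "0 < c" and K: "finite K" "i \<in> K"
  defines "p \<equiv> \<lambda>j. exp (c * (a j - Max (a ` K)))"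
  shows "measure (PiM K (\<lambda>_. density lborel (exponential_density c)))
      {X \<in> space (PiM K (\<lambda>_. density lborel (exponential_density c))).
        \<forall>j\<in>K. j \<noteq> i \<longrightarrow> a j + X j < a i + X i} =
    p i * tails_integral p (K - {i})"
proof -
  define E where "E = density lborel (exponential_density c)"
  define y0 where "y0 = Max (a ` K) - a i"
  have p_bounds: "0 \<le> p j \<and> p j \<le> 1" if "j \<in> K" for j
    using K that c by (simp add: p_def mult_nonneg_nonpos)
  have "emeasure (PiM K (\<lambda>_. E))
      {X \<in> space (PiM K (\<lambda>_. E)). \<forall>j\<in>K. j \<noteq> i \<longrightarrow> a j + X j < a i + X i} =
    (\<integral>\<^sup>+y. (\<Prod>j\<in>K - {i}. ennreal (1 - exp (- c * (a i + y - a j)))) \<partial>E)"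
    using K prob_space_exponential_density[OF c]
    by (simp add: emeasure_PiM_noisy_max E_def emeasure_exponential_density_lessThan[OF c])
  also have "\<dots> = (\<integral>\<^sup>+y. ennreal (c * exp (- c * y) *
      tails_poly p (K - {i}) (exp (- c * (y - y0)))) * indicator {y0..} y \<partial>lborel)"
  proof -
    have "(\<integral>\<^sup>+y. (\<Prod>j\<in>K - {i}. ennreal (1 - exp (- c * (a i + y - a j)))) \<partial>E) =
        (\<integral>\<^sup>+y. ennreal (exponential_density c y) *
          (\<Prod>j\<in>K - {i}. ennreal (1 - exp (- c * (a i + y - a j)))) \<partial>lborel)"
      unfolding E_def by (rule nn_integral_density) measurable
    then show ?thesis
      unfolding p_def y0_def exponential_density_noisy_max_integrand[OF c K] .
  qed
  also have "\<dots> = ennreal (exp (- c * y0) * tails_integral p (K - {i}))"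
    unfolding tails_integral_def using c p_bounds
    by (intro nn_integral_exp_substitution continuous_on_tails_poly tails_poly_nonneg) auto
  also have "exp (- c * y0) = p i"
    by (simp add: p_def y0_def algebra_simps)
  finally show ?thesis
    using tails_integral_nonneg[of "K - {i}" p] p_bounds K(2)
    by (simp add: measure_def E_def)
qed

theorem theorem1:
  fixes nbr :: "'d \<Rightarrow> 'd \<Rightarrow> bool" and q :: "'d \<Rightarrow> 'o \<Rightarrow> real" and D :: 'd
    and \<omega> :: "nat \<Rightarrow> 'o" and k :: nat and \<Delta> \<epsilon> :: real
  assumes "inj_on \<omega> {1..k}"
    and "\<Delta> = sensitivity nbr q \<omega> k" and "\<Delta> > 0"
    and "\<epsilon> > 0"
  shows "\<forall>i\<in>{1..k}. pmf (permute_and_flip (\<lambda>i. q D (\<omega> i)) k \<epsilon> \<Delta>) i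
                  = rnm_exp_prob (\<lambda>i. q D (\<omega> i)) k \<epsilon> \<Delta> i"
proof
  fix i assume i: "i \<in> {1..k}"
  define a where "a = (\<lambda>j. q D (\<omega> j))"
  define c where "c = \<epsilon> / (2 * \<Delta>)"
  define p where "p = (\<lambda>j. exp (c * (a j - Max (a ` {1..k}))))"
  have c: "0 < c"
    using assms(3,4) by (simp add: c_def)
  then have p_bounds: "0 \<le> p j \<and> p j \<le> 1" if "j \<in> {1..k}" for j
    using that by (simp add: p_def mult_nonneg_nonpos)
  have "pmf (permute_and_flip a k \<epsilon> \<Delta>) i = pmf (permute_flip p {1..k}) i"
    by (simp add: permute_and_flip_def permute_flip_def p_def c_def)
  also have "\<dots> = p i * tails_integral p ({1..k} - {i})"
    using i p_bounds by (intro pmf_permute_flip) auto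
  also have "\<dots> = rnm_exp_prob a k \<epsilon> \<Delta> i"
    using measure_exponential_noisy_max[OF c finite_atLeastAtMost i, of a]
    by (simp add: rnm_exp_prob_def p_def c_def)
  finally show "pmf (permute_and_flip (\<lambda>i. q D (\<omega> i)) k \<epsilon> \<Delta>) i
      = rnm_exp_prob (\<lambda>i. q D (\<omega> i)) k \<epsilon> \<Delta> i"
    by (simp add: a_def)
qed

end
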